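(* Let $V$ be a finite set, $\{C_\alpha\}$ a partition of $V$, and ${\bf t}=(t_i)_{i\in V}$, $\{\lambda_\alpha\}$ complex numbers. Then $$\int\mathcal{D}_{V,{\bf t}}(\psi,\bar\psi)\prod_\alpha f_{C_\alpha}^{(\lambda_\alpha)}=\prod_\alpha\Big(\lambda_\alpha+\sum_{i\in C_\alpha}(t_i-\lambda_\alpha)\Big).$$
   Context: For each $i\in V$ let $\psi_i,\bar\psi_i$ be anticommuting generators of a Grassmann algebra over $\mathbb{C}$; $\tau_A=\prod_{i\in A}\bar\psi_i\psi_i$ ($\tau_\emptyset=1$); $f_A^{(\lambda)}=\lambda(1-|A|)\tau_A+\sum_{i\in A}\tau_{A\setminus\{i\}}-\sum_{i,j\in A,\ i\neq j}\bar\psi_i\psi_j\,\tau_{A\setminus\{i,j\}}$. $\mathcal{D}_{V,{\bf t}}(\psi,\bar\psi)=\prod_{i\in V}d\psi_i\,d\bar\psi_i\,e^{t_i\bar\psi_i\psi_i}$, with Berezin conventions $\int d\psi_i\,d\bar\psi_i\,\bar\psi_i\psi_i=1$ and the integral of $1,\psi_i,\bar\psi_i$ equal to $0$. *)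

theory Defs
  imports Complex_Main "HOL-Library.Product_Lexorder"
begin

text \<open>Grassmann algebra over complex numbers with generators indexed by 'a \<times> bool:
  (i, False) is psi_i and (i, True) is psibar_i.  An element is represented by its
  coefficient function on monomials; a monomial is a finite set of generators,
  standing for the product of its generators in increasing (lexicographic) order.\<close>

type_synonym 'a grass = "('a \<times> bool) set \<Rightarrow> complex"

definition gsign :: "('a::linorder \<times> bool) set \<Rightarrow> ('a \<times> bool) set \<Rightarrow> complex" where
  "gsign S R = (-1) ^ card {(a, b). a \<in> S \<and> b \<in> R \<and> b < a}"

definition gmul :: "'a::linorder grass \<Rightarrow> 'a grass \<Rightarrow> 'a grass" where
  "gmul x y = (\<lambda>T. \<Sum>S\<in>Pow T. gsign S (T - S) * x S * y (T - S))"

definition gadd :: "'a grass \<Rightarrow> 'a grass \<Rightarrow> 'a grass" where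
  "gadd x y = (\<lambda>T. x T + y T)"

definition gsmul :: "complex \<Rightarrow> 'a grass \<Rightarrow> 'a grass" where
  "gsmul c x = (\<lambda>T. c * x T)"

definition gzero :: "'a grass" where
  "gzero = (\<lambda>T. 0)"

definition gone :: "'a grass" where
  "gone = (\<lambda>T. if T = {} then 1 else 0)"

definition gsum :: "('b \<Rightarrow> 'a grass) \<Rightarrow> 'b set \<Rightarrow> 'a grass" where
  "gsum F A = (\<lambda>T. \<Sum>a\<in>A. F a T)"

definition gprodl :: "'a::linorder grass list \<Rightarrow> 'a grass" where
  "gprodl xs = foldr gmul xs gone"

definition gpow :: "'a::linorder grass \<Rightarrow> nat \<Rightarrow> 'a grass" where
  "gpow x k = gprodl (replicate k x)"

definition gexp :: "'a::linorder grass \<Rightarrow> 'a grass" where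
  "gexp x = gsum (\<lambda>k. gsmul (1 / fact k) (gpow x k)) {..<(LEAST m. gpow x m = gzero)}"

definition gen :: "'a \<times> bool \<Rightarrow> 'a grass" where
  "gen g = (\<lambda>T. if T = {g} then 1 else 0)"

definition psi :: "'a \<Rightarrow> 'a grass" where
  "psi i = gen (i, False)"

definition psibar :: "'a \<Rightarrow> 'a grass" where
  "psibar i = gen (i, True)"

text \<open>tau_A = prod_{i in A} psibar_i psi_i  (factors are even, so order is irrelevant).\<close>
definition tau :: "'a::linorder set \<Rightarrow> 'a grass" where
  "tau A = gprodl (map (\<lambda>i. gmul (psibar i) (psi i)) (sorted_list_of_set A))"

definition fA :: "complex \<Rightarrow> 'a::linorder set \<Rightarrow> 'a grass" where
  "fA lam A = gadd (gadd (gsmul (lam * (1 - of_nat (card A))) (tau A))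
                         (gsum (\<lambda>i. tau (A - {i})) A))
                   (gsmul (-1) (gsum (\<lambda>(i, j). gmul (gmul (psibar i) (psi j)) (tau (A - {i, j})))
                                     {(i, j). i \<in> A \<and> j \<in> A \<and> i \<noteq> j}))"

text \<open>Berezin (left) derivative / integration with respect to a single generator:
  int d g  g * m = m  for monomials m not containing g.\<close>
definition gderiv :: "'a::linorder \<times> bool \<Rightarrow> 'a grass \<Rightarrow> 'a grass" where
  "gderiv g x = (\<lambda>T. if g \<in> T then 0 else (-1) ^ card {h \<in> T. h < g} * x (insert g T))"

text \<open>int dpsi_i dpsibar_i F  (inner integration over psibar_i first), so that
  int dpsi_i dpsibar_i psibar_i psi_i = 1.\<close>
definition pair_int :: "'a::linorder \<Rightarrow> 'a grass \<Rightarrow> 'a grass" where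
  "pair_int i F = gderiv (i, False) (gderiv (i, True) F)"

definition berezin :: "'a::linorder set \<Rightarrow> 'a grass \<Rightarrow> 'a grass" where
  "berezin V F = foldr pair_int (sorted_list_of_set V) F"

text \<open>int D_{V,t}(psi,psibar) F, with D_{V,t} = prod_i dpsi_i dpsibar_i exp(t_i psibar_i psi_i);
  the result is an element of the algebra (a scalar multiple of 1 when F lives in the
  algebra generated by V); we return its scalar part.\<close>
definition measure_int :: "'a::linorder set \<Rightarrow> ('a \<Rightarrow> complex) \<Rightarrow> 'a grass \<Rightarrow> complex" where
  "measure_int V t F =
     berezin V (gmul (gprodl (map (\<lambda>i. gexp (gsmul (t i) (gmul (psibar i) (psi i))))
                                  (sorted_list_of_set V))) F) {}"

end

theory Submission
  imports Defs
begin

text \<open>Only the monomials made of whole pairs \<open>psibar i, psi i\<close> matter: the exponentials and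
  the \<open>\<tau>\<^sub>A\<close> live on them, the off-diagonal terms \<open>psibar i * psi j * \<tau>\<^bsub>A-{i,j}\<^esub>\<close> of
  \<open>f\<^sub>A\<close> vanish on them, and the Berezin integral over \<open>V\<close> reads off the coefficient of the
  full pair monomial over \<open>V\<close>.  Hence the integral of any \<open>F\<close> against the Gaussian measure is a
  weighted sum of the coefficients of \<open>F\<close> at pair monomials, with a weight that is
  multiplicative over disjoint parts of \<open>V\<close>.  Factors supported on disjoint blocks therefore
  integrate separately, and on a single block \<open>C\<close> only \<open>\<tau>\<^sub>C\<close> and the \<open>\<tau>\<^bsub>C-{i}\<^esub>\<close> contribute,
  giving \<open>\<lambda>(1 - |C|) + \<Sum>\<^bsub>i\<in>C\<^esub> t\<^sub>i\<close>.\<close>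

definition pair_set :: "'a set \<Rightarrow> ('a \<times> bool) set" where
  "pair_set A = A \<times> UNIV"

definition diagonal :: "'a grass \<Rightarrow> bool" where
  "diagonal x \<longleftrightarrow> (\<forall>S. x S \<noteq> 0 \<longrightarrow> (\<exists>A. S = pair_set A))"

definition supported_in :: "'a grass \<Rightarrow> ('a \<times> bool) set \<Rightarrow> bool" where
  "supported_in x G \<longleftrightarrow> (\<forall>S. x S \<noteq> 0 \<longrightarrow> S \<subseteq> G)"

lemma pair_set_eq_iff [simp]: "pair_set A = pair_set B \<longleftrightarrow> A = B"
  unfolding pair_set_def by blast

lemma mem_pair_set [simp]: "x \<in> pair_set A \<longleftrightarrow> fst x \<in> A"
  by (cases x) (auto simp: pair_set_def)

lemma finite_pair_set [simp]: "finite (pair_set A) \<longleftrightarrow> finite A"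
  unfolding pair_set_def by (auto simp: finite_cartesian_product_iff)

lemma pair_set_subset_iff [simp]: "pair_set A \<subseteq> pair_set B \<longleftrightarrow> A \<subseteq> B"
  unfolding pair_set_def by auto

lemma pair_set_empty [simp]: "pair_set {} = {}"
  and pair_set_Un: "pair_set (A \<union> B) = pair_set A \<union> pair_set B"
  and pair_set_Diff: "pair_set (A - B) = pair_set A - pair_set B"
  unfolding pair_set_def by auto

lemma gmul_nonzeroE:
  assumes "gmul x y T \<noteq> 0"
  obtains S where "S \<subseteq> T" "x S \<noteq> 0" "y (T - S) \<noteq> 0"
proof -
  have "\<exists>S\<subseteq>T. x S \<noteq> 0 \<and> y (T - S) \<noteq> 0"
  proof (rule ccontr)
    assume "\<not> ?thesis"
    hence "gmul x y T = 0" unfolding gmul_def by (intro sum.neutral) auto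
    with assms show False by simp
  qed
  with that show thesis by blast
qed

lemma diagonal_gmul: "diagonal x \<Longrightarrow> diagonal y \<Longrightarrow> diagonal (gmul x y)"
  unfolding diagonal_def
proof (intro allI impI)
  fix T assume x: "\<forall>S. x S \<noteq> 0 \<longrightarrow> (\<exists>A. S = pair_set A)"
    and y: "\<forall>S. y S \<noteq> 0 \<longrightarrow> (\<exists>A. S = pair_set A)" and nz: "gmul x y T \<noteq> 0"
  from nz obtain S where S: "S \<subseteq> T" "x S \<noteq> 0" "y (T - S) \<noteq> 0" by (rule gmul_nonzeroE)
  from x S(2) obtain A where A: "S = pair_set A" by blast
  from y S(3) obtain B where B: "T - S = pair_set B" by blast
  from S(1) A B have "T = pair_set (A \<union> B)" by (auto simp: pair_set_Un)
  thus "\<exists>A. T = pair_set A" ..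
qed

lemma supported_in_gmul:
  "supported_in x G \<Longrightarrow> supported_in y H \<Longrightarrow> supported_in (gmul x y) (G \<union> H)"
  unfolding supported_in_def by (blast elim: gmul_nonzeroE)

lemma supported_in_mono: "supported_in x G \<Longrightarrow> G \<subseteq> H \<Longrightarrow> supported_in x H"
  unfolding supported_in_def by blast

lemma supported_in_gadd: "supported_in x G \<Longrightarrow> supported_in y G \<Longrightarrow> supported_in (gadd x y) G"
  unfolding supported_in_def gadd_def by (metis add.left_neutral add.right_neutral)

lemma supported_in_gsmul: "supported_in x G \<Longrightarrow> supported_in (gsmul c x) G"
  unfolding supported_in_def gsmul_def by auto

lemma supported_in_gsum: "(\<And>a. a \<in> I \<Longrightarrow> supported_in (F a) G) \<Longrightarrow> supported_in (gsum F I) G"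
  unfolding supported_in_def gsum_def by (blast intro: sum.neutral)

lemma diagonal_gone: "diagonal gone"
  unfolding diagonal_def gone_def by (auto intro: exI[of _ "{}"])

lemma supported_in_gone: "supported_in gone G"
  unfolding supported_in_def gone_def by auto

lemma gone_pair_set: "gone (pair_set W) = (if W = {} then 1 else 0)"
  by (auto simp: gone_def pair_set_def)

lemma diagonal_foldr_gmul: "(\<And>x. x \<in> set xs \<Longrightarrow> diagonal x) \<Longrightarrow> diagonal (foldr gmul xs gone)"
  by (induction xs) (auto intro: diagonal_gmul diagonal_gone)

lemma supported_in_foldr_gmul:
  "(\<And>a. a \<in> set as \<Longrightarrow> supported_in (g a) (pair_set (C a))) \<Longrightarrow>
    supported_in (foldr gmul (map g as) gone) (pair_set (\<Union>a\<in>set as. C a))"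
proof (induction as)
  case Nil
  show ?case by (simp add: supported_in_gone)
next
  case (Cons a as)
  then show ?case using supported_in_gmul[of "g a" _ "foldr gmul (map g as) gone"]
    by (simp add: pair_set_Un)
qed

text \<open>Each crossing of two whole pairs contributes four inversions.\<close>

lemma gsign_pair_set:
  assumes "A \<inter> B = {}"
  shows "gsign (pair_set A) (pair_set B) = 1"
proof -
  let ?I = "{(i, j). i \<in> A \<and> j \<in> B \<and> j < i}"
  let ?P = "?I \<times> (UNIV :: (bool \<times> bool) set)"
  let ?h = "\<lambda>((i, j), (b, c)). ((i, b), (j, c))"
  have inversions: "{(a, b). a \<in> pair_set A \<and> b \<in> pair_set B \<and> b < a} = ?h ` ?P"
  proof (intro set_eqI iffI)
    fix p assume "p \<in> {(a, b). a \<in> pair_set A \<and> b \<in> pair_set B \<and> b < a}"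
    then obtain i b j c where p: "p = ((i, b), (j, c))" "i \<in> A" "j \<in> B" "(j, c) < (i, b)"
      by (auto simp: pair_set_def)
    with assms have "j < i" by (auto simp: less_prod_def)
    with p show "p \<in> ?h ` ?P" by (auto intro!: image_eqI[where x = "((i, j), (b, c))"])
  qed (auto simp: pair_set_def less_prod_def)
  have "card (UNIV :: (bool \<times> bool) set) = 4"
    by (simp add: card_UNIV_bool card_cartesian_product flip: UNIV_Times_UNIV)
  moreover have "card (?h ` ?P) = card ?P"
    by (rule card_image) (auto simp: inj_on_def)
  ultimately have "card {(a, b). a \<in> pair_set A \<and> b \<in> pair_set B \<and> b < a} = card ?I * 4"
    unfolding inversions by (simp only: card_cartesian_product)
  thus ?thesis unfolding gsign_def by simp
qed

lemma gmul_diagonal_pair_set: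
  assumes "diagonal x" "finite W"
  shows "gmul x y (pair_set W) = (\<Sum>A\<in>Pow W. x (pair_set A) * y (pair_set (W - A)))"
proof -
  let ?g = "\<lambda>S. gsign S (pair_set W - S) * x S * y (pair_set W - S)"
  have "gmul x y (pair_set W) = (\<Sum>S\<in>Pow (pair_set W). ?g S)" unfolding gmul_def ..
  also have "\<dots> = (\<Sum>S\<in>pair_set ` Pow W. ?g S)"
  proof (rule sum.mono_neutral_right)
    show "\<forall>S\<in>Pow (pair_set W) - pair_set ` Pow W. ?g S = 0"
      using assms(1) unfolding diagonal_def by fastforce
  qed (use assms(2) in auto)
  also have "\<dots> = (\<Sum>A\<in>Pow W. ?g (pair_set A))"
    by (subst sum.reindex) (auto simp: inj_on_def)
  also have "\<dots> = (\<Sum>A\<in>Pow W. x (pair_set A) * y (pair_set (W - A)))"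
    by (intro sum.cong refl) (auto simp: gsign_pair_set simp flip: pair_set_Diff)
  finally show ?thesis .
qed

lemma gmul_supported_disjoint:
  assumes x: "supported_in x (pair_set A)" and y: "supported_in y (pair_set B)"
    and "A \<inter> B = {}" "finite W"
  shows "gmul x y (pair_set W) = x (pair_set (W \<inter> A)) * y (pair_set (W - A))"
proof -
  let ?g = "\<lambda>S. gsign S (pair_set W - S) * x S * y (pair_set W - S)"
  let ?S = "pair_set (W \<inter> A)"
  have "?g S = 0" if "S \<subseteq> pair_set W" "S \<noteq> ?S" for S
  proof (rule ccontr)
    assume "?g S \<noteq> 0"
    hence "S \<subseteq> pair_set A" "pair_set W - S \<subseteq> pair_set B"
      using x y unfolding supported_in_def by auto
    with that \<open>A \<inter> B = {}\<close> have "S = ?S" by (auto simp: pair_set_def)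
    with that show False by simp
  qed
  hence "gmul x y (pair_set W) = (\<Sum>S\<in>{?S}. ?g S)"
    unfolding gmul_def using \<open>finite W\<close> by (intro sum.mono_neutral_right) auto
  moreover have "pair_set W - ?S = pair_set (W - A)" by (auto simp: pair_set_def)
  moreover have "gsign ?S (pair_set (W - A)) = 1" by (rule gsign_pair_set) auto
  ultimately show ?thesis by simp
qed

lemma gsign_singletons: "gsign {a} {b} = (if b < a then -1 else 1)"
proof -
  have "{(x, y). x \<in> {a} \<and> y \<in> {b} \<and> y < x} = (if b < a then {(a, b)} else {})" by auto
  thus ?thesis unfolding gsign_def by simp
qed

lemma gmul_gen:
  "gmul (gen a) (gen b) T = (if T = {a, b} \<and> a \<noteq> b then gsign {a} {b} else 0)"
proof -
  let ?g = "\<lambda>S. gsign S (T - S) * gen a S * gen b (T - S)"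
  have zero: "?g S = 0" if "S \<noteq> {a} \<or> T - S \<noteq> {b}" for S
    using that by (auto simp: gen_def)
  show ?thesis
  proof (cases "T = {a, b} \<and> a \<noteq> b")
    case True
    hence "gmul (gen a) (gen b) T = (\<Sum>S\<in>{{a}}. ?g S)"
      unfolding gmul_def using zero by (intro sum.mono_neutral_right) auto
    with True show ?thesis by (auto simp: gen_def)
  next
    case False
    have "?g S = 0" if "S \<subseteq> T" for S
    proof (rule zero)
      show "S \<noteq> {a} \<or> T - S \<noteq> {b}" using False that by blast
    qed
    hence "gmul (gen a) (gen b) T = 0" unfolding gmul_def by (simp add: sum.neutral)
    thus ?thesis by (simp only: if_not_P[OF False])
  qed
qed

lemma gmul_psibar_psi_nonzeroD: "gmul (psibar i) (psi j) S \<noteq> 0 \<Longrightarrow> S = {(i, True), (j, False)}"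
  unfolding psibar_def psi_def gmul_gen by (auto split: if_splits)

definition psibar_psi :: "'a::linorder \<Rightarrow> 'a grass" where
  "psibar_psi i = gmul (psibar i) (psi i)"

text \<open>The sign: monomials list their generators in increasing order, and \<open>psi i\<close> comes
  before \<open>psibar i\<close>.\<close>

lemma psibar_psi_apply: "psibar_psi i T = (if T = pair_set {i} then -1 else 0)"
proof -
  have "pair_set {i} = {(i, True), (i, False)}" by (auto simp: pair_set_def)
  moreover have "(i, False) < (i, True)" by (simp add: less_prod_def)
  ultimately show ?thesis
    unfolding psibar_psi_def psibar_def psi_def gmul_gen by (simp add: gsign_singletons)
qed

lemma diagonal_psibar_psi: "diagonal (psibar_psi i)"
  unfolding diagonal_def psibar_psi_apply by auto

lemma supported_in_psibar_psi: "supported_in (psibar_psi i) (pair_set {i})"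
  unfolding supported_in_def psibar_psi_apply by auto

lemma tau_eq_foldr: "tau A = foldr gmul (map psibar_psi (sorted_list_of_set A)) gone"
  unfolding tau_def gprodl_def psibar_psi_def by simp

lemma foldr_psibar_psi_pair_set:
  assumes "distinct L" "finite W"
  shows "foldr gmul (map psibar_psi L) gone (pair_set W) = (if W = set L then (-1) ^ length L else 0)"
  using assms
proof (induction L arbitrary: W)
  case Nil
  then show ?case by (simp add: gone_pair_set)
next
  case (Cons a L)
  let ?P = "foldr gmul (map psibar_psi L) gone"
  have "gmul (psibar_psi a) ?P (pair_set W)
      = (\<Sum>B\<in>Pow W. psibar_psi a (pair_set B) * ?P (pair_set (W - B)))"
    by (rule gmul_diagonal_pair_set[OF diagonal_psibar_psi \<open>finite W\<close>])
  also have "\<dots> = (\<Sum>B\<in>Pow W. if B = {a} then - ?P (pair_set (W - {a})) else 0)"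
    by (intro sum.cong refl) (auto simp: psibar_psi_apply)
  also have "\<dots> = (if a \<in> W then - ?P (pair_set (W - {a})) else 0)"
    using \<open>finite W\<close> by simp
  also have "\<dots> = (if W = set (a # L) then (-1) ^ length (a # L) else 0)"
    using Cons by auto
  finally show ?case by simp
qed

lemma
  assumes "finite A"
  shows diagonal_tau: "diagonal (tau A)"
    and supported_in_tau: "supported_in (tau A) (pair_set A)"
    and tau_pair_set: "finite W \<Longrightarrow> tau A (pair_set W) = (if W = A then (-1) ^ card A else 0)"
proof -
  show "diagonal (tau A)"
    unfolding tau_eq_foldr by (rule diagonal_foldr_gmul) (auto simp: diagonal_psibar_psi)
  show "supported_in (tau A) (pair_set A)"
    using supported_in_foldr_gmul[of "sorted_list_of_set A" psibar_psi "\<lambda>i. {i}"] assms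
    unfolding tau_eq_foldr by (simp add: supported_in_psibar_psi)
  show "finite W \<Longrightarrow> tau A (pair_set W) = (if W = A then (-1) ^ card A else 0)"
    unfolding tau_eq_foldr using assms by (simp add: foldr_psibar_psi_pair_set)
qed

lemma gmul_gone_right:
  assumes "\<And>T. x T \<noteq> 0 \<Longrightarrow> finite T"
  shows "gmul x gone = x"
proof
  fix T
  let ?g = "\<lambda>S. gsign S (T - S) * x S * gone (T - S)"
  show "gmul x gone T = x T"
  proof (cases "finite T")
    case True
    hence "gmul x gone T = (\<Sum>S\<in>{T}. ?g S)"
      unfolding gmul_def by (intro sum.mono_neutral_right) (auto simp: gone_def)
    thus ?thesis by (simp add: gone_def gsign_def)
  next
    case False
    with assms show ?thesis unfolding gmul_def by auto
  qed
qed

text \<open>\<open>gexp\<close> truncates at the nilpotency index, which is \<open>1\<close> or \<open>2\<close> here.\<close>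

lemma gexp_square_zero:
  assumes unit: "gmul x gone = x" and square: "gmul x x = gzero"
  shows "gexp x = gadd gone x"
proof -
  have pow0: "gpow x 0 = gone" and pow1: "gpow x 1 = x" and pow2: "gpow x 2 = gzero"
    unfolding gpow_def gprodl_def using unit square by (simp_all add: numeral_2_eq_2)
  have "gone \<noteq> (gzero :: 'a grass)"
    unfolding gone_def gzero_def by (metis one_neq_zero)
  let ?m = "LEAST m. gpow x m = gzero"
  have "?m \<le> 2" by (rule Least_le) (rule pow2)
  moreover have m: "gpow x ?m = gzero" by (rule LeastI) (rule pow2)
  moreover have "?m \<noteq> 0" using m pow0 \<open>gone \<noteq> gzero\<close> by auto
  ultimately consider "?m = 1" | "?m = 2" by linarith
  thus ?thesis
  proof cases
    case 1
    with m pow1 have "x = gzero" by simp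
    with 1 pow0 show ?thesis
      by (simp add: gexp_def gsum_def gsmul_def gadd_def gzero_def)
  next
    case 2
    with pow0 pow1 show ?thesis
      by (simp add: gexp_def gsum_def gsmul_def gadd_def numeral_2_eq_2)
  qed
qed

lemma gexp_smul_psibar_psi: "gexp (gsmul c (psibar_psi i)) = gadd gone (gsmul c (psibar_psi i))"
proof (rule gexp_square_zero)
  have apply_eq: "gsmul c (psibar_psi i) T = (if T = pair_set {i} then - c else 0)" for T
    unfolding gsmul_def psibar_psi_apply by simp
  show "gmul (gsmul c (psibar_psi i)) gone = gsmul c (psibar_psi i)"
    by (rule gmul_gone_right) (simp add: apply_eq split: if_splits)
  show "gmul (gsmul c (psibar_psi i)) (gsmul c (psibar_psi i)) = gzero"
  proof
    fix T
    show "gmul (gsmul c (psibar_psi i)) (gsmul c (psibar_psi i)) T = gzero T"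
    proof (rule ccontr)
      assume "gmul (gsmul c (psibar_psi i)) (gsmul c (psibar_psi i)) T \<noteq> gzero T"
      then obtain S where "S \<subseteq> T" "gsmul c (psibar_psi i) S \<noteq> 0" "gsmul c (psibar_psi i) (T - S) \<noteq> 0"
        unfolding gzero_def by (rule gmul_nonzeroE)
      hence "S = pair_set {i}" "T - S = pair_set {i}" by (simp_all add: apply_eq split: if_splits)
      thus False by (auto simp: pair_set_def)
    qed
  qed
qed

lemma gexp_smul_psibar_psi_apply:
  "gexp (gsmul c (psibar_psi i)) T = gone T + (if T = pair_set {i} then - c else 0)"
  unfolding gexp_smul_psibar_psi by (simp add: gadd_def gsmul_def psibar_psi_apply)

lemma diagonal_gexp_smul_psibar_psi: "diagonal (gexp (gsmul c (psibar_psi i)))"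
  unfolding diagonal_def gexp_smul_psibar_psi_apply by (auto simp: gone_def intro: exI[of _ "{}"])

lemma foldr_gexp_pair_set:
  assumes "distinct L" "finite A"
  shows "foldr gmul (map (\<lambda>i. gexp (gsmul (t i) (psibar_psi i))) L) gone (pair_set A)
    = (if A \<subseteq> set L then \<Prod>j\<in>A. - t j else 0)"
  using assms
proof (induction L arbitrary: A)
  case Nil
  then show ?case by (simp add: gone_pair_set)
next
  case (Cons a L)
  let ?E = "\<lambda>i. gexp (gsmul (t i) (psibar_psi i))"
  let ?P = "foldr gmul (map ?E L) gone"
  have "gmul (?E a) ?P (pair_set A) = (\<Sum>B\<in>Pow A. ?E a (pair_set B) * ?P (pair_set (A - B)))"
    by (rule gmul_diagonal_pair_set[OF diagonal_gexp_smul_psibar_psi \<open>finite A\<close>])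
  also have "\<dots> = (\<Sum>B\<in>Pow A. (if B = {} then ?P (pair_set A) else 0)
      + (if B = {a} then - t a * ?P (pair_set (A - {a})) else 0))"
    by (intro sum.cong refl) (auto simp: gexp_smul_psibar_psi_apply gone_pair_set)
  also have "\<dots> = ?P (pair_set A) + (if a \<in> A then - t a * ?P (pair_set (A - {a})) else 0)"
    using \<open>finite A\<close> by (simp add: sum.distrib)
  also have "\<dots> = (if A \<subseteq> set (a # L) then \<Prod>j\<in>A. - t j else 0)"
  proof (cases "a \<in> A")
    case True
    with Cons.prems have "\<not> A \<subseteq> set L" by auto
    with True Cons show ?thesis by (auto simp: prod.remove insert_absorb subset_insert_iff)
  next
    case False
    with Cons show ?thesis by (auto simp: subset_insert)
  qed
  finally show ?case by simp
qed

lemma pair_int_apply: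
  assumes "finite T"
  shows "pair_int i H T = (if T \<inter> pair_set {i} = {} then - H (T \<union> pair_set {i}) else 0)"
proof (cases "(i, False) \<in> T \<or> (i, True) \<in> T")
  case True
  then show ?thesis unfolding pair_int_def gderiv_def by auto
next
  case False
  let ?K = "{h \<in> T. h < (i, False)}"
  have "{h \<in> insert (i, False) T. h < (i, True)} = insert (i, False) ?K"
    by (auto simp: less_prod_def)
  hence "card {h \<in> insert (i, False) T. h < (i, True)} = Suc (card ?K)"
    using assms by simp
  moreover have "insert (i, True) (insert (i, False) T) = T \<union> pair_set {i}"
    by (auto simp: pair_set_def)
  moreover have "T \<inter> pair_set {i} = {}"
    using False by (auto simp: pair_set_def) (metis (full_types))
  moreover have "(-1 :: complex) ^ card ?K * (-1) ^ Suc (card ?K) = -1"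
    by (simp flip: power_add)
  ultimately show ?thesis
    using False unfolding pair_int_def gderiv_def by (simp add: mult.assoc[symmetric])
qed

lemma foldr_pair_int_apply:
  assumes "distinct L" "finite T"
  shows "foldr pair_int L H T
    = (if T \<inter> pair_set (set L) = {} then (-1) ^ length L * H (T \<union> pair_set (set L)) else 0)"
  using assms
proof (induction L arbitrary: T)
  case Nil
  then show ?case by simp
next
  case (Cons a L)
  have "pair_set {a} \<inter> pair_set (set L) = {}" using Cons.prems(1) by (auto simp: pair_set_def)
  moreover have "pair_set (set (a # L)) = pair_set {a} \<union> pair_set (set L)"
    by (simp flip: pair_set_Un)
  ultimately show ?case
    using Cons by (auto simp: pair_int_apply Un_assoc)
qed

lemma berezin_empty_apply:
  assumes "finite V"
  shows "berezin V H {} = (-1) ^ card V * H (pair_set V)"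
  using foldr_pair_int_apply[of "sorted_list_of_set V" "{}" H] assms
  unfolding berezin_def by simp

text \<open>For \<open>i \<in> X\<close> the factor \<open>t i\<close> comes from the exponential; for \<open>i \<notin> X\<close> the factor
  \<open>-1\<close> turns the coefficient of \<open>psi i * psibar i\<close> into that of \<open>psibar i * psi i\<close>, whose
  integral is \<open>1\<close>.\<close>

definition gauss_weight :: "('a \<Rightarrow> complex) \<Rightarrow> 'a set \<Rightarrow> 'a set \<Rightarrow> complex" where
  "gauss_weight t V X = (\<Prod>i\<in>V. if i \<in> X then t i else -1)"

lemma gauss_weight_eq:
  assumes "finite V" "X \<subseteq> V"
  shows "gauss_weight t V X = (-1) ^ card (V - X) * (\<Prod>i\<in>X. t i)"
  unfolding gauss_weight_def using assms
  by (simp add: prod.If_cases Int_absorb1 Diff_eq mult.commute)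

lemma gauss_weight_Un:
  assumes "finite A" "finite B" "A \<inter> B = {}" "X \<subseteq> A" "Y \<subseteq> B"
  shows "gauss_weight t (A \<union> B) (X \<union> Y) = gauss_weight t A X * gauss_weight t B Y"
  unfolding gauss_weight_def using assms
  by (subst prod.union_disjoint) (auto intro!: arg_cong2[where f = "(*)"] prod.cong)

lemma measure_int_eq_sum_gauss_weight:
  assumes "finite V"
  shows "measure_int V t F = (\<Sum>X\<in>Pow V. gauss_weight t V X * F (pair_set (V - X)))"
proof -
  let ?E = "foldr gmul (map (\<lambda>i. gexp (gsmul (t i) (psibar_psi i))) (sorted_list_of_set V)) gone"
  have "diagonal ?E"
    by (rule diagonal_foldr_gmul) (auto simp: diagonal_gexp_smul_psibar_psi)
  have "measure_int V t F = (-1) ^ card V * gmul ?E F (pair_set V)"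
    unfolding measure_int_def gprodl_def psibar_psi_def[symmetric]
    using assms by (simp add: berezin_empty_apply)
  also have "\<dots> = (-1) ^ card V * (\<Sum>X\<in>Pow V. ?E (pair_set X) * F (pair_set (V - X)))"
    using \<open>diagonal ?E\<close> assms by (simp add: gmul_diagonal_pair_set)
  also have "\<dots> = (\<Sum>X\<in>Pow V. gauss_weight t V X * F (pair_set (V - X)))"
    unfolding sum_distrib_left
  proof (intro sum.cong refl)
    fix X assume "X \<in> Pow V"
    hence "finite X" using assms by (auto intro: finite_subset)
    have "card V = card (V - X) + card X"
      using card_Int_Diff[OF assms, of X] \<open>X \<in> Pow V\<close> by (simp add: Int_absorb1)
    hence "(-1) ^ card V * ?E (pair_set X)
        = (-1) ^ card (V - X) * ((-1) ^ card X * (-1) ^ card X) * (\<Prod>i\<in>X. t i)"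
      using \<open>X \<in> Pow V\<close> \<open>finite X\<close> assms
      by (simp add: foldr_gexp_pair_set prod_uminus power_add)
    also have "\<dots> = gauss_weight t V X"
      using assms \<open>X \<in> Pow V\<close> by (simp add: gauss_weight_eq flip: power_add)
    finally show "(-1) ^ card V * (?E (pair_set X) * F (pair_set (V - X)))
        = gauss_weight t V X * F (pair_set (V - X))" by simp
  qed
  finally show ?thesis .
qed

lemma sum_Pow_Un:
  assumes "A \<inter> B = {}"
  shows "sum f (Pow (A \<union> B)) = (\<Sum>X\<in>Pow A. \<Sum>Y\<in>Pow B. f (X \<union> Y))"
proof -
  have "inj_on (\<lambda>(X, Y). X \<union> Y) (Pow A \<times> Pow B)"
    using assms by (auto simp: inj_on_def) blast+
  moreover have "(\<lambda>(X, Y). X \<union> Y) ` (Pow A \<times> Pow B) = Pow (A \<union> B)"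
  proof (intro subset_antisym subsetI)
    fix Z assume "Z \<in> Pow (A \<union> B)"
    thus "Z \<in> (\<lambda>(X, Y). X \<union> Y) ` (Pow A \<times> Pow B)"
      by (intro image_eqI[where x = "(Z \<inter> A, Z \<inter> B)"]) auto
  qed auto
  ultimately have "sum f (Pow (A \<union> B)) = (\<Sum>(X, Y)\<in>Pow A \<times> Pow B. f (X \<union> Y))"
    by (metis (no_types, lifting) sum.reindex_cong split_def)
  thus ?thesis by (simp add: sum.cartesian_product)
qed

lemma measure_int_gmul_disjoint:
  assumes "finite A" "finite B" "A \<inter> B = {}"
    and x: "supported_in x (pair_set A)" and y: "supported_in y (pair_set B)"
  shows "measure_int (A \<union> B) t (gmul x y) = measure_int A t x * measure_int B t y"
proof -
  have "measure_int (A \<union> B) t (gmul x y)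
      = (\<Sum>X\<in>Pow A. \<Sum>Y\<in>Pow B. gauss_weight t (A \<union> B) (X \<union> Y) * gmul x y (pair_set (A \<union> B - (X \<union> Y))))"
    using assms by (simp add: measure_int_eq_sum_gauss_weight sum_Pow_Un)
  also have "\<dots> = (\<Sum>X\<in>Pow A. \<Sum>Y\<in>Pow B. (gauss_weight t A X * x (pair_set (A - X)))
      * (gauss_weight t B Y * y (pair_set (B - Y))))"
  proof (intro sum.cong refl)
    fix X Y assume "X \<in> Pow A" "Y \<in> Pow B"
    moreover have "(A \<union> B - (X \<union> Y)) \<inter> A = A - X" "A \<union> B - (X \<union> Y) - A = B - Y"
      using \<open>A \<inter> B = {}\<close> \<open>X \<in> Pow A\<close> \<open>Y \<in> Pow B\<close> by auto
    ultimately show "gauss_weight t (A \<union> B) (X \<union> Y) * gmul x y (pair_set (A \<union> B - (X \<union> Y)))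
        = (gauss_weight t A X * x (pair_set (A - X))) * (gauss_weight t B Y * y (pair_set (B - Y)))"
      using assms by (simp add: gauss_weight_Un gmul_supported_disjoint[OF x y])
  qed
  also have "\<dots> = measure_int A t x * measure_int B t y"
    using assms by (simp add: measure_int_eq_sum_gauss_weight sum_product)
  finally show ?thesis .
qed

lemma measure_int_empty_gone: "measure_int {} t gone = 1"
  by (simp add: measure_int_eq_sum_gauss_weight gauss_weight_def gone_def)

lemma measure_int_foldr_gmul:
  assumes "distinct as"
    and "\<And>a. a \<in> set as \<Longrightarrow> finite (C a)"
    and "\<And>a. a \<in> set as \<Longrightarrow> supported_in (g a) (pair_set (C a))"
    and "\<forall>a\<in>set as. \<forall>b\<in>set as. a \<noteq> b \<longrightarrow> C a \<inter> C b = {}"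
  shows "measure_int (\<Union>a\<in>set as. C a) t (foldr gmul (map g as) gone)
    = (\<Prod>a\<in>set as. measure_int (C a) t (g a))"
  using assms
proof (induction as)
  case Nil
  then show ?case by (simp add: measure_int_empty_gone)
next
  case (Cons a as)
  have "C a \<inter> (\<Union>b\<in>set as. C b) = {}"
    using Cons.prems(1,4) by fastforce
  moreover have "supported_in (foldr gmul (map g as) gone) (pair_set (\<Union>b\<in>set as. C b))"
    using Cons.prems(3) by (intro supported_in_foldr_gmul) simp
  ultimately show ?case
    using Cons by (simp add: measure_int_gmul_disjoint)
qed

lemma offdiagonal_tau_pair_set:
  assumes "i \<noteq> j" "finite R"
  shows "gmul (gmul (psibar i) (psi j)) (tau R) (pair_set W) = 0"
proof (rule ccontr)
  assume "gmul (gmul (psibar i) (psi j)) (tau R) (pair_set W) \<noteq> 0"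
  then obtain S where S: "S \<subseteq> pair_set W" "gmul (psibar i) (psi j) S \<noteq> 0"
    and tau_nz: "tau R (pair_set W - S) \<noteq> 0"
    by (rule gmul_nonzeroE)
  have S_eq: "S = {(i, True), (j, False)}" using S(2) by (rule gmul_psibar_psi_nonzeroD)
  obtain R' where R': "pair_set W - S = pair_set R'"
    using diagonal_tau[OF \<open>finite R\<close>] tau_nz unfolding diagonal_def by blast
  from S(1) S_eq \<open>i \<noteq> j\<close> have "(i, False) \<in> pair_set W - S" by auto
  hence "(i, True) \<in> pair_set W - S" unfolding R' by simp
  with S_eq show False by simp
qed

lemma supported_in_fA:
  assumes "finite A"
  shows "supported_in (fA lam A) (pair_set A)"
  unfolding fA_def
proof (intro supported_in_gadd supported_in_gsmul supported_in_gsum)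
  show "supported_in (tau A) (pair_set A)" using assms by (rule supported_in_tau)
  show "supported_in (tau (A - {i})) (pair_set A)" for i
    using assms by (intro supported_in_mono[OF supported_in_tau]) auto
  fix p assume "p \<in> {(i, j). i \<in> A \<and> j \<in> A \<and> i \<noteq> j}"
  then obtain i j where p: "p = (i, j)" "i \<in> A" "j \<in> A" by blast
  have "supported_in (gmul (psibar i) (psi j)) (pair_set A)"
    unfolding supported_in_def using p by (auto dest: gmul_psibar_psi_nonzeroD)
  moreover have "supported_in (tau (A - {i, j})) (pair_set A)"
    using assms by (intro supported_in_mono[OF supported_in_tau]) auto
  ultimately show "supported_in ((\<lambda>(i, j). gmul (gmul (psibar i) (psi j)) (tau (A - {i, j}))) p) (pair_set A)"
    using supported_in_gmul p(1) by fastforce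
qed

lemma fA_pair_set_Diff:
  assumes "finite C" "X \<subseteq> C"
  shows "fA lam C (pair_set (C - X)) = (-1) ^ card (C - X)
    * (if X = {} then lam * (1 - of_nat (card C)) else if \<exists>i. X = {i} then 1 else 0)"
proof -
  have tau_C: "tau C (pair_set (C - X)) = (if X = {} then (-1) ^ card (C - X) else 0)"
    using assms by (auto simp: tau_pair_set)
  have tau_C_minus: "tau (C - {i}) (pair_set (C - X)) = (if X = {i} then (-1) ^ card (C - X) else 0)"
    if "i \<in> C" for i
  proof -
    have "C - X = C - {i} \<longleftrightarrow> X = {i}" using assms(2) that by auto
    thus ?thesis using assms(1) by (simp add: tau_pair_set)
  qed
  have "(\<Sum>(i, j)\<in>{(i, j). i \<in> C \<and> j \<in> C \<and> i \<noteq> j}.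
      gmul (gmul (psibar i) (psi j)) (tau (C - {i, j})) (pair_set (C - X))) = 0"
    using assms(1) by (intro sum.neutral) (auto simp: offdiagonal_tau_pair_set)
  hence "fA lam C (pair_set (C - X)) = lam * (1 - of_nat (card C)) * tau C (pair_set (C - X))
      + (\<Sum>i\<in>C. tau (C - {i}) (pair_set (C - X)))"
    unfolding fA_def gadd_def gsmul_def gsum_def by (simp add: case_prod_unfold)
  also have "(\<Sum>i\<in>C. tau (C - {i}) (pair_set (C - X)))
      = (if \<exists>i. X = {i} then (-1) ^ card (C - X) else 0)"
    using assms by (auto simp: tau_C_minus)
  finally show ?thesis by (simp add: tau_C)
qed

lemma measure_int_fA:
  assumes "finite C" "C \<noteq> {}"
  shows "measure_int C t (fA lam C) = lam + (\<Sum>i\<in>C. t i - lam)"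
proof -
  let ?h = "\<lambda>X. (\<Prod>i\<in>X. t i) * (if X = {} then lam * (1 - of_nat (card C))
    else if \<exists>i. X = {i} then 1 else 0)"
  have "measure_int C t (fA lam C) = (\<Sum>X\<in>Pow C. ?h X)"
    unfolding measure_int_eq_sum_gauss_weight[OF assms(1)]
  proof (intro sum.cong refl)
    fix X assume "X \<in> Pow C"
    have "(-1 :: complex) ^ card (C - X) * (-1) ^ card (C - X) = 1"
      by (simp flip: power_add)
    with \<open>X \<in> Pow C\<close> show "gauss_weight t C X * fA lam C (pair_set (C - X)) = ?h X"
      using assms(1) by (simp add: gauss_weight_eq fA_pair_set_Diff)
  qed
  also have "\<dots> = (\<Sum>X\<in>insert {} ((\<lambda>i. {i}) ` C). ?h X)"
    using assms(1) by (intro sum.mono_neutral_right) auto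
  also have "\<dots> = ?h {} + (\<Sum>i\<in>C. ?h {i})"
    using assms(1) by (subst sum.insert) (auto simp: sum.reindex)
  also have "\<dots> = lam * (1 - of_nat (card C)) + (\<Sum>i\<in>C. t i)"
    by simp
  also have "\<dots> = lam + (\<Sum>i\<in>C. t i - lam)"
    by (simp add: sum_subtractf algebra_simps)
  finally show ?thesis .
qed

theorem corollary5p3:
  fixes V :: "'a::linorder set" and n :: nat and C :: "nat \<Rightarrow> 'a set"
    and t :: "'a \<Rightarrow> complex" and lam :: "nat \<Rightarrow> complex"
  assumes "finite V"
    and "\<forall>\<alpha><n. C \<alpha> \<noteq> {}"
    and "\<forall>\<alpha><n. \<forall>\<beta><n. \<alpha> \<noteq> \<beta> \<longrightarrow> C \<alpha> \<inter> C \<beta> = {}"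
    and "(\<Union>\<alpha><n. C \<alpha>) = V"
  shows "measure_int V t (gprodl (map (\<lambda>\<alpha>. fA (lam \<alpha>) (C \<alpha>)) [0..<n]))
         = (\<Prod>\<alpha><n. lam \<alpha> + (\<Sum>i\<in>C \<alpha>. t i - lam \<alpha>))"
proof -
  have finite_C: "finite (C \<alpha>)" if "\<alpha> < n" for \<alpha>
    using assms(1,4) that by (auto intro: finite_subset)
  have "measure_int V t (gprodl (map (\<lambda>\<alpha>. fA (lam \<alpha>) (C \<alpha>)) [0..<n]))
      = measure_int (\<Union>\<alpha>\<in>set [0..<n]. C \<alpha>) t (foldr gmul (map (\<lambda>\<alpha>. fA (lam \<alpha>) (C \<alpha>)) [0..<n]) gone)"
    using assms(4) by (simp add: gprodl_def lessThan_atLeast0)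
  also have "\<dots> = (\<Prod>\<alpha>\<in>set [0..<n]. measure_int (C \<alpha>) t (fA (lam \<alpha>) (C \<alpha>)))"
    using assms(3) by (intro measure_int_foldr_gmul) (auto simp: finite_C supported_in_fA)
  also have "\<dots> = (\<Prod>\<alpha><n. lam \<alpha> + (\<Sum>i\<in>C \<alpha>. t i - lam \<alpha>))"
    using assms(2) by (simp add: lessThan_atLeast0 finite_C measure_int_fA)
  finally show ?thesis .
qed

end
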